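(* Let $a>0$, $p>1$, and let $\phi\in C^1((0,a])\cap C^0([0,a])$ satisfy $\phi(0)=0$, $\phi(t)>0$ for $t\in(0,a]$, and $c_1t^{p-1+\delta}\le\phi(t)\le c_2t^{p-1+\delta}$ for all $t\in(0,a]$, for some constants $c_1,c_2,\delta>0$. Then $C^1_0[0,a]$ is dense in $\mathcal E$ with respect to the norm $\|u\|=\left(\int_0^a|u'|^p\phi\,dt\right)^{1/p}$.
   Context: $W^{1,p}(0,a;\phi)=\{u:[0,a]\to\mathbb R:\ u\in L^1_{\mathrm{loc}}[0,a],\ \int_0^a|u'|^p\phi\,dt<\infty\}$, where $u'$ is the distributional derivative (such $u$ are absolutely continuous on $[\epsilon,a]$ for every $\epsilon\in(0,a)$). $\mathcal E=\{u\in W^{1,p}(0,a;\phi): u(a)=0\}$, normed by $\|u\|=(\int_0^a|u'|^p\phi\,dt)^{1/p}$. $C^1_0[0,a]$ denotes the $C^1$ functions on $[0,a]$ vanishing at $0$ and at $a$. *)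

theory Defs
  imports "HOL-Analysis.Analysis"
begin

definition smooth_fun :: "(real \<Rightarrow> real) \<Rightarrow> bool" where
  "smooth_fun \<psi> \<longleftrightarrow> (\<forall>k x. ((deriv ^^ k) \<psi>) differentiable (at x))"

definition test_fun :: "real \<Rightarrow> (real \<Rightarrow> real) \<Rightarrow> bool" where
  "test_fun a \<psi> \<longleftrightarrow> smooth_fun \<psi> \<and>
     (\<exists>c d. 0 < c \<and> c \<le> d \<and> d < a \<and> (\<forall>t. t \<notin> {c..d} \<longrightarrow> \<psi> t = 0))"

definition loc_int :: "real \<Rightarrow> (real \<Rightarrow> real) \<Rightarrow> bool" where
  "loc_int a u \<longleftrightarrow> (\<forall>c d. 0 < c \<and> d < a \<longrightarrow> set_integrable lborel {c..d} u)"

definition distr_deriv :: "real \<Rightarrow> (real \<Rightarrow> real) \<Rightarrow> (real \<Rightarrow> real) \<Rightarrow> bool" where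
  "distr_deriv a u g \<longleftrightarrow> loc_int a u \<and> loc_int a g \<and>
     (\<forall>\<psi>. test_fun a \<psi> \<longrightarrow>
        (LINT t:{0<..<a}|lborel. u t * deriv \<psi> t) = - (LINT t:{0<..<a}|lborel. g t * \<psi> t))"

definition W1p :: "real \<Rightarrow> real \<Rightarrow> (real \<Rightarrow> real) \<Rightarrow> (real \<Rightarrow> real) \<Rightarrow> (real \<Rightarrow> real) \<Rightarrow> bool" where
  "W1p a p \<phi> u g \<longleftrightarrow> distr_deriv a u g \<and> set_borel_measurable lborel {0<..<a} g \<and>
     set_integrable lborel {0..a} (\<lambda>t. \<bar>g t\<bar> powr p * \<phi> t)"

text \<open>u \<in> E (using the continuous representative on (0,a]) with derivative g.\<close>
definition E_space :: "real \<Rightarrow> real \<Rightarrow> (real \<Rightarrow> real) \<Rightarrow> (real \<Rightarrow> real) \<Rightarrow> (real \<Rightarrow> real) \<Rightarrow> bool" where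
  "E_space a p \<phi> u g \<longleftrightarrow> W1p a p \<phi> u g \<and> continuous_on {0<..a} u \<and> u a = 0"

definition C1_0 :: "real \<Rightarrow> (real \<Rightarrow> real) \<Rightarrow> (real \<Rightarrow> real) \<Rightarrow> bool" where
  "C1_0 a v v' \<longleftrightarrow> continuous_on {0..a} v' \<and>
     (\<forall>t\<in>{0..a}. (v has_real_derivative v' t) (at t within {0..a})) \<and> v 0 = 0 \<and> v a = 0"

end

theory Submission
  imports Defs
begin

(*
  Only the derivative matters: the norm of E is the p-th root of the weighted energy
  int_0^a |u'|^p phi, and for w continuous on [0,a] with int_0^a w = 0 the primitive
  v(t) = int_0^t w lies in C^1_0[0,a].  So it suffices to approximate g = u' in energy by
  continuous functions of mean zero.  Truncate g; approximate the bounded truncation in L^1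
  by a continuous function, which for bounded functions and p >= 1 controls the energy;
  finally remove the mean I by subtracting a multiple of a tent function supported in
  [0, eta].  The multiple is O(I / eta), so the correction has energy
  O(eta^(-p) * eta * eta^(p-1+delta)) = O(eta^delta), small because phi(t) <= c2 t^(p-1+delta).
*)

lemma finite_measure_restrict_lborel_Icc: "finite_measure (restrict_space lborel {l..u::real})"
  by (intro finite_measureI)
    (simp add: space_restrict_space emeasure_restrict_space emeasure_lborel_Icc_eq)

lemma integrable_restrict_Icc_bounded:
  fixes f :: "real \<Rightarrow> real"
  assumes "f \<in> borel_measurable (restrict_space lborel {l..u})"
    and "\<And>x. x \<in> {l..u} \<Longrightarrow> \<bar>f x\<bar> \<le> B"
  shows "integrable (restrict_space lborel {l..u}) f"
  using assms
  by (intro finite_measure.integrable_const_bound[OF finite_measure_restrict_lborel_Icc, where B=B])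
    (auto simp: space_restrict_space)

lemma borel_measurable_restrict_space_continuous:
  fixes f :: "real \<Rightarrow> real"
  assumes "continuous_on UNIV f"
  shows "f \<in> borel_measurable (restrict_space lborel S)"
  using borel_measurable_continuous_onI[OF assms] by (intro measurable_restrict_space1) simp

lemma integrable_restrict_Icc_continuous:
  fixes f :: "real \<Rightarrow> real"
  assumes "continuous_on UNIV f"
  shows "integrable (restrict_space lborel {l..u}) f"
  using borel_integrable_atLeastAtMost'[OF continuous_on_subset[OF assms]]
  by (simp add: set_integrable_def integrable_restrict_space)

lemma integral_restrict_Icc_continuous:
  fixes f :: "real \<Rightarrow> real"
  assumes "continuous_on {l..u} f"
  shows "(\<integral>x. f x \<partial>restrict_space lborel {l..u}) = integral {l..u} f"
  using set_borel_integral_eq_integral(2)[OF borel_integrable_atLeastAtMost'[OF assms]]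
  by (simp add: set_lebesgue_integral_def integral_restrict_space)

lemma borel_measurable_restrict_Icc_of_Ioo:
  fixes g :: "real \<Rightarrow> real"
  assumes "l < u" and g: "set_borel_measurable lborel {l<..<u} g"
  shows "g \<in> borel_measurable (restrict_space lborel {l..u})"
proof -
  have [measurable]: "(\<lambda>x. indicator {l<..<u} x *\<^sub>R g x) \<in> borel_measurable lborel"
    using g unfolding set_borel_measurable_def .
  have "(\<lambda>x. indicator {l..u} x *\<^sub>R g x) =
      (\<lambda>x. indicator {l<..<u} x *\<^sub>R g x + indicator {l} x * g l + indicator {u} x * g u)"
    using assms(1) by (auto simp: indicator_def fun_eq_iff)
  also have "\<dots> \<in> borel_measurable lborel"
    by measurable
  finally show ?thesis
    by (simp add: borel_measurable_restrict_space_iff)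
qed

lemma integrable_restrict_Icc_indicator:
  fixes l u x y K :: real
  shows "integrable (restrict_space lborel {l..u}) (\<lambda>t. K * indicator {x..y} t)"
  by (intro integrable_restrict_Icc_bounded[where B="\<bar>K\<bar>"] measurable_restrict_space1)
    (measurable, auto simp: indicator_def)

lemma integral_restrict_Icc_indicator:
  fixes l u x y K :: real
  assumes "l \<le> x" "x \<le> y" "y \<le> u"
  shows "(\<integral>t. K * indicator {x..y} t \<partial>restrict_space lborel {l..u}) = K * (y - x)"
  using assms by (simp add: integral_restrict_space indicator_inter_arith[symmetric] Int_absorb2
      measure_restrict_space)

section \<open>Continuous functions are dense in \<open>L\<^sup>1\<close> of an interval\<close>

lemma borel_closed_open_sandwich:
  fixes A :: "'a::euclidean_space set"
  assumes A: "A \<in> sets borel" and e: "0 < e"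
  obtains F U where "closed F" "open U" "F \<subseteq> A" "A \<subseteq> U" "emeasure lborel (U - F) < ennreal e"
proof -
  have A_leb: "A \<in> sets lebesgue"
    using A by simp
  obtain U where U: "open U" "A \<subseteq> U" "U - A \<in> lmeasurable"
    "emeasure lebesgue (U - A) < ennreal (e/2)"
    by (rule sets_lebesgue_outer_open[OF A_leb half_gt_zero[OF e]])
  obtain F where F: "closed F" "F \<subseteq> A" "A - F \<in> lmeasurable"
    "emeasure lebesgue (A - F) < ennreal (e/2)"
    by (rule sets_lebesgue_inner_closed[OF A_leb half_gt_zero[OF e]])
  have "emeasure lborel (U - F) = emeasure lebesgue (U - F)"
    using U(1) F(1) by (simp add: emeasure_completion)
  also have "\<dots> \<le> emeasure lebesgue ((U - A) \<union> (A - F))"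
    using U(3) F(3) by (intro emeasure_mono) (auto dest: fmeasurableD)
  also have "\<dots> \<le> emeasure lebesgue (U - A) + emeasure lebesgue (A - F)"
    using U(3) F(3) by (intro emeasure_subadditive) (auto dest: fmeasurableD)
  also have "\<dots> < ennreal (e/2 + e/2)"
    using U(4) F(4) by (rule add_mono_ennreal)
  finally have "emeasure lborel (U - F) < ennreal e"
    by simp
  with F(1) U(1) F(2) U(2) show ?thesis
    by (rule that)
qed

lemma integral_abs_diff_triangle:
  fixes f g h :: "'a \<Rightarrow> real"
  assumes "integrable M f" "integrable M g" "integrable M h"
  shows "(\<integral>x. \<bar>f x - h x\<bar> \<partial>M) \<le> (\<integral>x. \<bar>f x - g x\<bar> \<partial>M) + (\<integral>x. \<bar>g x - h x\<bar> \<partial>M)"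
proof -
  have "(\<integral>x. \<bar>f x - h x\<bar> \<partial>M) \<le> (\<integral>x. \<bar>f x - g x\<bar> + \<bar>g x - h x\<bar> \<partial>M)"
    using assms by (intro integral_mono) auto
  also have "\<dots> = (\<integral>x. \<bar>f x - g x\<bar> \<partial>M) + (\<integral>x. \<bar>g x - h x\<bar> \<partial>M)"
    using assms by (intro Bochner_Integration.integral_add) auto
  finally show ?thesis .
qed

definition continuous_L1_approximable :: "real \<Rightarrow> real \<Rightarrow> (real \<Rightarrow> real) \<Rightarrow> bool" where
  "continuous_L1_approximable l u f \<longleftrightarrow>
     (\<forall>e>0. \<exists>v. continuous_on UNIV v \<and> (\<integral>x. \<bar>f x - v x\<bar> \<partial>restrict_space lborel {l..u}) < e)"

lemma continuous_L1_approximable_indicator: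
  assumes A: "A \<in> sets borel"
  shows "continuous_L1_approximable l u (indicator A)"
  unfolding continuous_L1_approximable_def
proof (intro allI impI)
  fix e :: real assume "0 < e"
  let ?M = "restrict_space lborel {l..u}"
  obtain F U where FU: "closed F" "open U" "F \<subseteq> A" "A \<subseteq> U"
    and small: "emeasure lborel (U - F) < ennreal e"
    using borel_closed_open_sandwich[OF A \<open>0 < e\<close>] by blast
  have "closed (- U)" "F \<inter> - U = {}"
    using FU by auto
  with FU(1) obtain v :: "real \<Rightarrow> real" where v: "continuous_on UNIV v"
      "\<And>x. v x \<in> closed_segment 1 0" "\<And>x. x \<in> F \<Longrightarrow> v x = 1" "\<And>x. x \<in> - U \<Longrightarrow> v x = 0"
    by (rule Urysohn[where a=1 and b=0]) auto
  have v01: "v x \<in> {0..1}" for x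
    using v(2)[of x] by (simp add: closed_segment_eq_real_ivl)
  have [measurable]: "A \<in> sets borel" "U - F \<in> sets borel" "v \<in> borel_measurable borel"
    using A FU(1,2) borel_measurable_continuous_onI[OF v(1)] by auto
  have fin: "emeasure lborel (U - F) < \<infinity>"
    using small by (metis ennreal_less_top infinity_ennreal_def order.strict_trans)
  have "(\<integral>x. \<bar>indicator A x - v x\<bar> \<partial>?M) \<le> (\<integral>x. indicator (U - F) x \<partial>?M)"
  proof (rule integral_mono)
    show "integrable ?M (\<lambda>x. \<bar>indicator A x - v x\<bar>)"
      using v01 by (intro integrable_restrict_Icc_bounded[where B=1] measurable_restrict_space1)
        (measurable, auto simp: indicator_def)
    show "integrable ?M (\<lambda>x. indicator (U - F) x :: real)"
      by (intro integrable_restrict_Icc_bounded[where B=1] measurable_restrict_space1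
          borel_measurable_indicator) auto
    show "\<bar>indicator A x - v x\<bar> \<le> indicator (U - F) x" for x
      using v(3,4)[of x] v01[of x] FU(3,4) by (auto simp: indicator_def)
  qed
  also have "\<dots> = measure lborel ((U - F) \<inter> {l..u})"
    by (simp add: integral_restrict_space indicator_inter_arith[symmetric] Int_commute
        measure_restrict_space)
  also have "\<dots> \<le> measure lborel (U - F)"
    using fin by (intro measure_mono_fmeasurable) (auto simp: fmeasurable_def)
  also have "\<dots> < e"
    using fin small by (simp add: measure_def)
  finally show "\<exists>v. continuous_on UNIV v \<and> (\<integral>x. \<bar>indicator A x - v x\<bar> \<partial>?M) < e"
    using v(1) by blast
qed

lemma continuous_L1_approximable_scaleR:
  assumes "continuous_L1_approximable l u f"
  shows "continuous_L1_approximable l u (\<lambda>x. f x *\<^sub>R c)"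
  unfolding continuous_L1_approximable_def
proof (intro allI impI)
  fix e :: real assume "0 < e"
  let ?M = "restrict_space lborel {l..u}"
  have "0 < e / (\<bar>c\<bar> + 1)"
    using \<open>0 < e\<close> by simp
  then obtain v where v: "continuous_on UNIV v" "(\<integral>x. \<bar>f x - v x\<bar> \<partial>?M) < e / (\<bar>c\<bar> + 1)"
    using assms unfolding continuous_L1_approximable_def by blast
  have "(\<integral>x. \<bar>f x * c - v x * c\<bar> \<partial>?M) = \<bar>c\<bar> * (\<integral>x. \<bar>f x - v x\<bar> \<partial>?M)"
    by (simp add: abs_mult flip: left_diff_distrib)
  also have "\<dots> \<le> \<bar>c\<bar> * (e / (\<bar>c\<bar> + 1))"
    using v(2) by (intro mult_left_mono) auto
  also have "\<dots> < e"
    using \<open>0 < e\<close> by (simp add: field_simps)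
  finally show "\<exists>v. continuous_on UNIV v \<and> (\<integral>x. \<bar>f x *\<^sub>R c - v x\<bar> \<partial>?M) < e"
    using v(1) by (intro exI[of _ "\<lambda>x. v x * c"]) (auto intro: continuous_intros)
qed

lemma continuous_L1_approximable_add:
  assumes "integrable (restrict_space lborel {l..u}) f" "continuous_L1_approximable l u f"
    and "integrable (restrict_space lborel {l..u}) g" "continuous_L1_approximable l u g"
  shows "continuous_L1_approximable l u (\<lambda>x. f x + g x)"
  unfolding continuous_L1_approximable_def
proof (intro allI impI)
  fix e :: real assume "0 < e"
  let ?M = "restrict_space lborel {l..u}"
  obtain vf vg where vf: "continuous_on UNIV vf" "(\<integral>x. \<bar>f x - vf x\<bar> \<partial>?M) < e/2"
    and vg: "continuous_on UNIV vg" "(\<integral>x. \<bar>g x - vg x\<bar> \<partial>?M) < e/2"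
    using assms(2,4) \<open>0 < e\<close> unfolding continuous_L1_approximable_def by (meson half_gt_zero)
  note int = assms(1,3)
    integrable_restrict_Icc_continuous[OF vf(1)] integrable_restrict_Icc_continuous[OF vg(1)]
  have "(\<integral>x. \<bar>(f x + g x) - (vf x + vg x)\<bar> \<partial>?M) \<le> (\<integral>x. \<bar>f x - vf x\<bar> + \<bar>g x - vg x\<bar> \<partial>?M)"
    using int by (intro integral_mono) auto
  also have "\<dots> < e"
    using int vf(2) vg(2) by simp
  finally show "\<exists>v. continuous_on UNIV v \<and> (\<integral>x. \<bar>(f x + g x) - v x\<bar> \<partial>?M) < e"
    using vf(1) vg(1) by (intro exI[of _ "\<lambda>x. vf x + vg x"]) (auto intro: continuous_intros)
qed

text \<open>The hypotheses are those of the limit step of \<open>integrable_induct\<close>.\<close>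

lemma continuous_L1_approximable_dominated_limit:
  fixes l u :: real and s :: "nat \<Rightarrow> real \<Rightarrow> real"
  defines "M \<equiv> restrict_space lborel {l..u}"
  assumes s: "\<And>i. integrable M (s i)" "\<And>i. continuous_L1_approximable l u (s i)"
    and lim: "\<And>x. x \<in> space M \<Longrightarrow> (\<lambda>i. s i x) \<longlonglongrightarrow> f x"
    and dom: "\<And>i x. x \<in> space M \<Longrightarrow> \<bar>s i x\<bar> \<le> 2 * \<bar>f x\<bar>"
    and f: "integrable M f"
  shows "continuous_L1_approximable l u f"
  unfolding continuous_L1_approximable_def M_def[symmetric]
proof (intro allI impI)
  fix e :: real assume "0 < e"
  have "(\<lambda>i. \<integral>x. \<bar>s i x - f x\<bar> \<partial>M) \<longlonglongrightarrow> (\<integral>x. 0 \<partial>M)"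
  proof (rule integral_dominated_convergence[where w="\<lambda>x. 3 * \<bar>f x\<bar>"])
    show "AE x in M. (\<lambda>i. \<bar>s i x - f x\<bar>) \<longlonglongrightarrow> 0"
    proof (rule AE_I2)
      fix x assume "x \<in> space M"
      then have "(\<lambda>i. \<bar>s i x - f x\<bar>) \<longlonglongrightarrow> \<bar>f x - f x\<bar>"
        by (intro tendsto_intros lim)
      then show "(\<lambda>i. \<bar>s i x - f x\<bar>) \<longlonglongrightarrow> 0"
        by simp
    qed
    show "AE x in M. norm \<bar>s i x - f x\<bar> \<le> 3 * \<bar>f x\<bar>" for i
      using dom[of _ i] by (intro AE_I2) fastforce
  qed (use s(1) f in auto)
  then have "eventually (\<lambda>i. (\<integral>x. \<bar>s i x - f x\<bar> \<partial>M) < e/2) sequentially"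
    using \<open>0 < e\<close> by (intro order_tendstoD(2)) auto
  then obtain i where i: "(\<integral>x. \<bar>s i x - f x\<bar> \<partial>M) < e/2"
    unfolding eventually_sequentially by blast
  obtain v where v: "continuous_on UNIV v" "(\<integral>x. \<bar>s i x - v x\<bar> \<partial>M) < e/2"
    using s(2)[of i] \<open>0 < e\<close> unfolding continuous_L1_approximable_def M_def by (meson half_gt_zero)
  have "(\<integral>x. \<bar>f x - v x\<bar> \<partial>M) \<le> (\<integral>x. \<bar>f x - s i x\<bar> \<partial>M) + (\<integral>x. \<bar>s i x - v x\<bar> \<partial>M)"
    using f s(1) integrable_restrict_Icc_continuous[OF v(1)] unfolding M_def
    by (rule integral_abs_diff_triangle)
  also have "\<dots> < e"
    using i v(2) by (simp add: abs_minus_commute)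
  finally show "\<exists>v. continuous_on UNIV v \<and> (\<integral>x. \<bar>f x - v x\<bar> \<partial>M) < e"
    using v(1) by blast
qed

lemma integrable_continuous_L1_approximable:
  assumes "integrable (restrict_space lborel {l..u}) f"
  shows "continuous_L1_approximable l u f"
  using assms
proof (induction rule: integrable_induct)
  case (base A c)
  then have "A \<in> sets borel"
    by (auto simp: sets_restrict_space_iff)
  then show ?case
    by (rule continuous_L1_approximable_scaleR[OF continuous_L1_approximable_indicator])
next
  case (add f g)
  show ?case
    by (rule continuous_L1_approximable_add[OF add.hyps(1) add.IH(1) add.hyps(2) add.IH(2)])
next
  case (lim f s)
  show ?case
    by (rule continuous_L1_approximable_dominated_limit[where s=s and f=f]) (use lim in simp_all)
qed

section \<open>Approximation in the weighted \<open>p\<close>-energy\<close>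

lemma abs_add_powr_le:
  fixes x y p :: real
  assumes "0 \<le> p"
  shows "\<bar>x + y\<bar> powr p \<le> 2 powr p * (\<bar>x\<bar> powr p + \<bar>y\<bar> powr p)"
proof -
  have "\<bar>x + y\<bar> powr p \<le> (2 * max \<bar>x\<bar> \<bar>y\<bar>) powr p"
    using assms by (intro powr_mono2) auto
  also have "\<dots> = 2 powr p * max \<bar>x\<bar> \<bar>y\<bar> powr p"
    by (simp add: powr_mult)
  also have "\<dots> \<le> 2 powr p * (\<bar>x\<bar> powr p + \<bar>y\<bar> powr p)"
    by (intro mult_left_mono) (auto simp: max_def)
  finally show ?thesis .
qed

lemma powr_le_powr_minus_one_mult:
  fixes d D p :: real
  assumes "0 \<le> d" "d \<le> D" "1 \<le> p"
  shows "d powr p \<le> D powr (p - 1) * d"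
proof (cases "d = 0")
  case False
  then have "d powr p = d powr (p - 1) * d"
    using powr_add[of d "p - 1" 1] assms(1) by simp
  also have "\<dots> \<le> D powr (p - 1) * d"
    using assms by (intro mult_right_mono powr_mono2) auto
  finally show ?thesis .
qed simp

lemma powr_root_less_of_less_powr:
  fixes x e p :: real
  assumes "0 \<le> x" "x < e powr p" "0 < e" "0 < p"
  shows "x powr (1 / p) < e"
proof -
  have "x powr (1 / p) < (e powr p) powr (1 / p)"
    using assms by (intro powr_less_mono2) auto
  also have "\<dots> = e"
    using assms by (simp add: powr_powr)
  finally show ?thesis .
qed

lemma exists_small_powr:
  fixes a \<delta> e K :: real
  assumes "0 < a" "0 < \<delta>" "0 < e" "0 \<le> K"
  obtains \<eta> where "0 < \<eta>" "\<eta> \<le> a" "K * \<eta> powr \<delta> < e"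
proof
  define \<eta> where "\<eta> = min a ((e / (K + 1)) powr (1 / \<delta>))"
  show "0 < \<eta>" "\<eta> \<le> a"
    using assms by (auto simp: \<eta>_def)
  have "\<eta> powr \<delta> \<le> ((e / (K + 1)) powr (1 / \<delta>)) powr \<delta>"
    using assms \<open>0 < \<eta>\<close> by (intro powr_mono2) (auto simp: \<eta>_def)
  also have "\<dots> = e / (K + 1)"
    using assms by (simp add: powr_powr)
  finally have "K * \<eta> powr \<delta> \<le> K * (e / (K + 1))"
    using assms(4) by (rule mult_left_mono)
  also have "\<dots> < e"
    using assms by (simp add: field_simps)
  finally show "K * \<eta> powr \<delta> < e" .
qed

definition tent :: "real \<Rightarrow> real \<Rightarrow> real" where
  "tent \<eta> t = max 0 (1 - t / \<eta>)"

lemma continuous_on_tent: "continuous_on UNIV (tent \<eta>)"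
  unfolding tent_def divide_inverse by (intro continuous_intros)

lemma tent_bounds:
  assumes "0 < \<eta>" "0 \<le> t"
  shows "0 \<le> tent \<eta> t" "tent \<eta> t \<le> 1"
  using assms by (auto simp: tent_def)

lemma tent_eq_0: "0 < \<eta> \<Longrightarrow> \<eta> \<le> t \<Longrightarrow> tent \<eta> t = 0"
  by (simp add: tent_def field_simps)

lemma integral_tent_ge:
  assumes "0 < \<eta>" "\<eta> \<le> b"
  shows "\<eta> / 4 \<le> (\<integral>t. tent \<eta> t \<partial>restrict_space lborel {0..b})"
proof -
  let ?M = "restrict_space lborel {0..b}"
  have "tent \<eta> t \<ge> 1/2 * indicator {0..\<eta>/2} t" if "t \<in> {0..b}" for t
    using assms that tent_bounds[OF assms(1), of t]
    by (auto simp: tent_def indicator_def field_simps)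
  then have "(\<integral>t. 1/2 * indicator {0..\<eta>/2} t \<partial>?M) \<le> (\<integral>t. tent \<eta> t \<partial>?M)"
    by (intro integral_mono integrable_restrict_Icc_indicator
        integrable_restrict_Icc_continuous[OF continuous_on_tent]) auto
  also have "(\<integral>t. 1/2 * indicator {0..\<eta>/2} t \<partial>?M) = \<eta> / 4"
    using assms by (subst integral_restrict_Icc_indicator) auto
  finally show ?thesis .
qed

lemma C1_0_integral_of_mean_zero:
  fixes w :: "real \<Rightarrow> real"
  assumes "continuous_on {0..a} w" "integral {0..a} w = 0"
  shows "C1_0 a (\<lambda>t. integral {0..t} w) w"
  unfolding C1_0_def using assms by (auto intro: integral_has_real_derivative)

locale weighted_energy =
  fixes a p :: real and \<phi> :: "real \<Rightarrow> real"
  assumes a_pos: "0 < a" and p_ge_1: "1 \<le> p"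
    and weight_continuous: "continuous_on {0..a} \<phi>"
    and weight_nonneg: "\<And>t. t \<in> {0..a} \<Longrightarrow> 0 \<le> \<phi> t"
begin

abbreviation M :: "real measure" where "M \<equiv> restrict_space lborel {0..a}"

definition energy :: "(real \<Rightarrow> real) \<Rightarrow> real" where
  "energy f = (\<integral>t. \<bar>f t\<bar> powr p * \<phi> t \<partial>M)"

definition finite_energy :: "(real \<Rightarrow> real) \<Rightarrow> bool" where
  "finite_energy f \<longleftrightarrow> f \<in> borel_measurable M \<and> integrable M (\<lambda>t. \<bar>f t\<bar> powr p * \<phi> t)"

definition energy_approximable :: "(real \<Rightarrow> real) set \<Rightarrow> (real \<Rightarrow> real) set \<Rightarrow> bool" where
  "energy_approximable A B \<longleftrightarrow>
     (\<forall>f\<in>A. \<forall>e>0. \<exists>h\<in>B. finite_energy (\<lambda>t. f t - h t) \<and> energy (\<lambda>t. f t - h t) < e)"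

lemma weight_measurable [measurable]: "\<phi> \<in> borel_measurable M"
  using borel_measurable_continuous_on_restrict[OF weight_continuous]
  by (simp add: measurable_cong_sets sets_restrict_space)

lemma weight_bounded:
  obtains \<Phi> where "0 \<le> \<Phi>" "\<And>t. t \<in> {0..a} \<Longrightarrow> \<phi> t \<le> \<Phi>"
  using continuous_attains_sup[OF compact_Icc _ weight_continuous] a_pos weight_nonneg
  by (metis atLeastAtMost_iff atLeastatMost_empty_iff2 less_le_not_le order_trans)

lemma energy_nonneg: "0 \<le> energy f"
  unfolding energy_def using weight_nonneg by (intro integral_nonneg_AE AE_I2) auto

lemma energy_eq_set_integral: "energy f = (LINT t:{0..a}|lborel. \<bar>f t\<bar> powr p * \<phi> t)"
  by (simp add: energy_def set_lebesgue_integral_def integral_restrict_space)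

lemma set_integrable_if_finite_energy:
  "finite_energy f \<Longrightarrow> set_integrable lborel {0..a} (\<lambda>t. \<bar>f t\<bar> powr p * \<phi> t)"
  by (simp add: finite_energy_def set_integrable_def integrable_restrict_space)

lemma finite_energy_if_set_integrable:
  assumes "set_borel_measurable lborel {0<..<a} f"
    and "set_integrable lborel {0..a} (\<lambda>t. \<bar>f t\<bar> powr p * \<phi> t)"
  shows "finite_energy f"
  using assms a_pos unfolding finite_energy_def
  by (auto simp: set_integrable_def integrable_restrict_space
      intro: borel_measurable_restrict_Icc_of_Ioo)

lemma finite_energy_bounded:
  assumes "f \<in> borel_measurable M" "\<And>t. t \<in> {0..a} \<Longrightarrow> \<bar>f t\<bar> \<le> B"
  shows "finite_energy f"
proof -
  obtain \<Phi> where \<Phi>: "\<And>t. t \<in> {0..a} \<Longrightarrow> \<phi> t \<le> \<Phi>"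
    using weight_bounded by blast
  have "\<bar>\<bar>f t\<bar> powr p * \<phi> t\<bar> \<le> B powr p * \<Phi>" if "t \<in> {0..a}" for t
    using assms(2)[OF that] \<Phi>[OF that] weight_nonneg[OF that] p_ge_1
    by (auto simp: abs_mult intro!: mult_mono powr_mono2)
  then show ?thesis
    unfolding finite_energy_def using assms(1)
    by (auto intro!: integrable_restrict_Icc_bounded[where B="B powr p * \<Phi>"])
qed

lemma finite_energy_add:
  assumes "finite_energy f" "finite_energy g"
  shows "finite_energy (\<lambda>t. f t + g t)"
    and "energy (\<lambda>t. f t + g t) \<le> 2 powr p * (energy f + energy g)"
proof -
  let ?S = "\<lambda>t. 2 powr p * (\<bar>f t\<bar> powr p * \<phi> t + \<bar>g t\<bar> powr p * \<phi> t)"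
  have [measurable]: "f \<in> borel_measurable M" "g \<in> borel_measurable M"
    and int: "integrable M ?S"
    using assms by (auto simp: finite_energy_def)
  have bound: "\<bar>f t + g t\<bar> powr p * \<phi> t \<le> ?S t" if "t \<in> {0..a}" for t
    using mult_right_mono[OF abs_add_powr_le weight_nonneg[OF that]] p_ge_1
    by (simp add: algebra_simps)
  have int_sum: "integrable M (\<lambda>t. \<bar>f t + g t\<bar> powr p * \<phi> t)"
    using bound weight_nonneg by (intro Bochner_Integration.integrable_bound[OF int]) auto
  then show "finite_energy (\<lambda>t. f t + g t)"
    by (simp add: finite_energy_def)
  have "energy (\<lambda>t. f t + g t) \<le> (\<integral>t. ?S t \<partial>M)"
    unfolding energy_def using bound by (intro integral_mono[OF int_sum int]) auto
  also have "\<dots> = 2 powr p * (energy f + energy g)"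
    using assms by (simp add: energy_def finite_energy_def)
  finally show "energy (\<lambda>t. f t + g t) \<le> 2 powr p * (energy f + energy g)" .
qed

lemma energy_approximable_trans:
  assumes "energy_approximable A B" "energy_approximable B C"
  shows "energy_approximable A C"
  unfolding energy_approximable_def
proof (intro ballI allI impI)
  fix f e assume "f \<in> A" "(e::real) > 0"
  define e' where "e' = e / (2 * 2 powr p)"
  have "e' > 0" using \<open>e > 0\<close> by (simp add: e'_def)
  obtain h where "h \<in> B" and h: "finite_energy (\<lambda>t. f t - h t)" "energy (\<lambda>t. f t - h t) < e'"
    using assms(1) \<open>f \<in> A\<close> \<open>e' > 0\<close> unfolding energy_approximable_def by blast
  obtain k where "k \<in> C" and k: "finite_energy (\<lambda>t. h t - k t)" "energy (\<lambda>t. h t - k t) < e'"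
    using assms(2) \<open>h \<in> B\<close> \<open>e' > 0\<close> unfolding energy_approximable_def by blast
  have "energy (\<lambda>t. f t - k t) \<le> 2 powr p * (energy (\<lambda>t. f t - h t) + energy (\<lambda>t. h t - k t))"
    using finite_energy_add(2)[OF h(1) k(1)] by simp
  also have "\<dots> < 2 powr p * (e' + e')"
    using h(2) k(2) by (intro mult_strict_left_mono) auto
  also have "\<dots> = e"
    by (simp add: e'_def)
  finally show "\<exists>k\<in>C. finite_energy (\<lambda>t. f t - k t) \<and> energy (\<lambda>t. f t - k t) < e"
    using \<open>k \<in> C\<close> finite_energy_add(1)[OF h(1) k(1)] by auto
qed

lemma finite_energy_approximable_by_bounded:
  "energy_approximable {f. finite_energy f} {h. h \<in> borel_measurable M \<and> (\<exists>B. \<forall>t. \<bar>h t\<bar> \<le> B)}"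
  unfolding energy_approximable_def
proof (intro ballI allI impI)
  fix f and e :: real assume "f \<in> {f. finite_energy f}" "e > 0"
  then have [measurable]: "f \<in> borel_measurable M"
    and f_int: "integrable M (\<lambda>t. \<bar>f t\<bar> powr p * \<phi> t)"
    by (auto simp: finite_energy_def)
  define trunc where "trunc n t = max (- real n) (min (real n) (f t))" for n t
  have [measurable]: "trunc n \<in> borel_measurable M" for n
    unfolding trunc_def by measurable
  have trunc_le: "\<bar>f t - trunc n t\<bar> powr p * \<phi> t \<le> \<bar>f t\<bar> powr p * \<phi> t" if "t \<in> {0..a}" for n t
    using weight_nonneg[OF that] p_ge_1
    by (intro mult_right_mono powr_mono2) (auto simp: trunc_def)
  have trunc_energy: "finite_energy (\<lambda>t. f t - trunc n t)" for n
    unfolding finite_energy_def using trunc_le weight_nonneg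
    by (auto intro!: Bochner_Integration.integrable_bound[OF f_int])
  have "(\<lambda>n. energy (\<lambda>t. f t - trunc n t)) \<longlonglongrightarrow> (\<integral>t. 0 \<partial>M)"
    unfolding energy_def
  proof (rule integral_dominated_convergence[where w="\<lambda>t. \<bar>f t\<bar> powr p * \<phi> t"])
    show "AE t in M. (\<lambda>n. \<bar>f t - trunc n t\<bar> powr p * \<phi> t) \<longlonglongrightarrow> 0"
    proof (rule AE_I2)
      fix t
      obtain N :: nat where "\<bar>f t\<bar> \<le> real N"
        using real_arch_simple by blast
      then have "\<forall>n\<ge>N. \<bar>f t - trunc n t\<bar> powr p * \<phi> t = 0"
        by (auto simp: trunc_def)
      then have "eventually (\<lambda>n. \<bar>f t - trunc n t\<bar> powr p * \<phi> t = 0) sequentially"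
        unfolding eventually_sequentially by blast
      then show "(\<lambda>n. \<bar>f t - trunc n t\<bar> powr p * \<phi> t) \<longlonglongrightarrow> 0"
        by (rule tendsto_eventually)
    qed
  qed (use f_int trunc_le weight_nonneg in auto)
  then have "eventually (\<lambda>n. energy (\<lambda>t. f t - trunc n t) < e) sequentially"
    using \<open>e > 0\<close> by (intro order_tendstoD(2)) auto
  then obtain n where "energy (\<lambda>t. f t - trunc n t) < e"
    unfolding eventually_sequentially by blast
  moreover have "\<bar>trunc n t\<bar> \<le> real n" for t
    by (auto simp: trunc_def)
  ultimately show "\<exists>h\<in>{h. h \<in> borel_measurable M \<and> (\<exists>B. \<forall>t. \<bar>h t\<bar> \<le> B)}.
      finite_energy (\<lambda>t. f t - h t) \<and> energy (\<lambda>t. f t - h t) < e"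
    using trunc_energy by (intro bexI[of _ "trunc n"]) auto
qed

lemma energy_le_L1_norm:
  obtains K where "0 < K"
    "\<And>f. f \<in> borel_measurable M \<Longrightarrow> (\<And>t. \<bar>f t\<bar> \<le> D) \<Longrightarrow>
      energy f \<le> K * (\<integral>t. \<bar>f t\<bar> \<partial>M)"
proof -
  obtain \<Phi> where \<Phi>: "0 \<le> \<Phi>" "\<And>t. t \<in> {0..a} \<Longrightarrow> \<phi> t \<le> \<Phi>"
    using weight_bounded by blast
  define K where "K = D powr (p - 1) * \<Phi> + 1"
  show ?thesis
  proof (rule that)
    show "0 < K"
      using \<Phi>(1) by (simp add: K_def add_nonneg_pos)
    fix f assume f [measurable]: "f \<in> borel_measurable M" and bounded: "\<And>t. \<bar>f t\<bar> \<le> D"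
    have pointwise: "\<bar>f t\<bar> powr p * \<phi> t \<le> K * \<bar>f t\<bar>" if "t \<in> {0..a}" for t
    proof -
      have "\<bar>f t\<bar> powr p * \<phi> t \<le> (D powr (p - 1) * \<bar>f t\<bar>) * \<Phi>"
        using powr_le_powr_minus_one_mult[OF _ bounded p_ge_1] \<Phi>(2)[OF that] weight_nonneg[OF that]
        by (intro mult_mono) auto
      also have "\<dots> \<le> K * \<bar>f t\<bar>"
        using \<Phi>(1) by (simp add: K_def algebra_simps)
      finally show ?thesis .
    qed
    have "integrable M f"
      using bounded by (intro integrable_restrict_Icc_bounded) auto
    then have "energy f \<le> (\<integral>t. K * \<bar>f t\<bar> \<partial>M)"
      unfolding energy_def using finite_energy_bounded[OF f bounded] pointwise
      by (intro integral_mono) (auto simp: finite_energy_def)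
    then show "energy f \<le> K * (\<integral>t. \<bar>f t\<bar> \<partial>M)"
      by simp
  qed
qed

lemma bounded_approximable_by_continuous:
  "energy_approximable {h. h \<in> borel_measurable M \<and> (\<exists>B. \<forall>t. \<bar>h t\<bar> \<le> B)} {v. continuous_on UNIV v}"
  unfolding energy_approximable_def
proof (intro ballI allI impI)
  fix h :: "real \<Rightarrow> real" and e :: real
  assume "h \<in> {h. h \<in> borel_measurable M \<and> (\<exists>B. \<forall>t. \<bar>h t\<bar> \<le> B)}" "e > 0"
  then obtain B where [measurable]: "h \<in> borel_measurable M" and hB: "\<And>t. \<bar>h t\<bar> \<le> B"
    by auto
  obtain K where K: "0 < K" "\<And>f. f \<in> borel_measurable M \<Longrightarrow> (\<And>t. \<bar>f t\<bar> \<le> 2 * B) \<Longrightarrow>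
      energy f \<le> K * (\<integral>t. \<bar>f t\<bar> \<partial>M)"
    using energy_le_L1_norm[where D="2 * B"] by blast
  have "integrable M h"
    using hB by (intro integrable_restrict_Icc_bounded) auto
  moreover have "0 < e / K"
    using \<open>e > 0\<close> K(1) by simp
  ultimately obtain v0 where v0: "continuous_on UNIV v0" "(\<integral>t. \<bar>h t - v0 t\<bar> \<partial>M) < e / K"
    using integrable_continuous_L1_approximable unfolding continuous_L1_approximable_def by blast
  define v where "v t = max (- B) (min B (v0 t))" for t
  have v_cont: "continuous_on UNIV v"
    unfolding v_def using v0(1) by (intro continuous_intros)
  have [measurable]: "v \<in> borel_measurable M"
    by (rule borel_measurable_restrict_space_continuous[OF v_cont])
  have close: "\<bar>h t - v t\<bar> \<le> \<bar>h t - v0 t\<bar>" and bounded: "\<bar>h t - v t\<bar> \<le> 2 * B" for t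
    using hB[of t] by (auto simp: v_def)
  have fin: "finite_energy (\<lambda>t. h t - v t)"
    using bounded by (intro finite_energy_bounded) auto
  have "energy (\<lambda>t. h t - v t) \<le> K * (\<integral>t. \<bar>h t - v t\<bar> \<partial>M)"
    using bounded by (intro K(2)) auto
  also have "\<dots> \<le> K * (\<integral>t. \<bar>h t - v0 t\<bar> \<partial>M)"
    using close K(1) \<open>integrable M h\<close> integrable_restrict_Icc_continuous[OF v_cont]
      integrable_restrict_Icc_continuous[OF v0(1)]
    by (intro mult_left_mono integral_mono) auto
  also have "\<dots> < e"
    using v0(2) K(1) by (simp add: field_simps)
  finally show "\<exists>v\<in>{v. continuous_on UNIV v}.
      finite_energy (\<lambda>t. h t - v t) \<and> energy (\<lambda>t. h t - v t) < e"
    using v_cont fin by blast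
qed

end

locale weighted_energy_power_bound = weighted_energy +
  fixes c \<delta> :: real
  assumes c_pos: "0 < c" and \<delta>_pos: "0 < \<delta>"
    and weight_le_power: "\<And>t. t \<in> {0..a} \<Longrightarrow> \<phi> t \<le> c * t powr (p - 1 + \<delta>)"
begin

lemma energy_scaled_tent_le:
  assumes "0 < \<eta>" "\<eta> \<le> a"
  shows "finite_energy (\<lambda>t. C * tent \<eta> t)"
    and "energy (\<lambda>t. C * tent \<eta> t) \<le> \<bar>C\<bar> powr p * c * \<eta> powr (p + \<delta>)"
proof -
  have [measurable]: "tent \<eta> \<in> borel_measurable M"
    by (rule borel_measurable_restrict_space_continuous[OF continuous_on_tent])
  have tent_le: "\<bar>C * tent \<eta> t\<bar> \<le> \<bar>C\<bar>" if "t \<in> {0..a}" for t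
    using tent_bounds[OF \<open>0 < \<eta>\<close>, of t] that by (auto simp: abs_mult mult_left_le)
  show fin: "finite_energy (\<lambda>t. C * tent \<eta> t)"
    using tent_le by (intro finite_energy_bounded) auto
  have weight_near_0: "\<phi> t \<le> c * \<eta> powr (p - 1 + \<delta>)" if "t \<in> {0..\<eta>}" for t
  proof -
    have "\<phi> t \<le> c * t powr (p - 1 + \<delta>)"
      using that assms(2) by (intro weight_le_power) auto
    also have "\<dots> \<le> c * \<eta> powr (p - 1 + \<delta>)"
      using that c_pos \<delta>_pos p_ge_1 by (intro mult_left_mono powr_mono2) auto
    finally show ?thesis .
  qed
  let ?K = "\<bar>C\<bar> powr p * (c * \<eta> powr (p - 1 + \<delta>))"
  have pointwise: "\<bar>C * tent \<eta> t\<bar> powr p * \<phi> t \<le> ?K * indicator {0..\<eta>} t"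
    if "t \<in> {0..a}" for t
  proof (cases "t \<le> \<eta>")
    case True
    then show ?thesis
      using that tent_le[OF that] weight_near_0[of t] weight_nonneg[OF that] p_ge_1
      by (auto intro!: mult_mono powr_mono2)
  qed (use tent_eq_0[OF \<open>0 < \<eta>\<close>] in auto)
  have "energy (\<lambda>t. C * tent \<eta> t) \<le> (\<integral>t. ?K * indicator {0..\<eta>} t \<partial>M)"
    unfolding energy_def using fin pointwise
    by (intro integral_mono integrable_restrict_Icc_indicator) (auto simp: finite_energy_def)
  also have "\<dots> = \<bar>C\<bar> powr p * c * (\<eta> powr (p - 1 + \<delta>) * \<eta>)"
    using assms by (subst integral_restrict_Icc_indicator) auto
  also have "\<eta> powr (p - 1 + \<delta>) * \<eta> = \<eta> powr (p + \<delta>)"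
    using powr_add[of \<eta> "p - 1 + \<delta>" 1] \<open>0 < \<eta>\<close> by simp
  finally show "energy (\<lambda>t. C * tent \<eta> t) \<le> \<bar>C\<bar> powr p * c * \<eta> powr (p + \<delta>)" .
qed

lemma continuous_approximable_by_mean_zero:
  "energy_approximable {v. continuous_on UNIV v} {w. continuous_on UNIV w \<and> (\<integral>t. w t \<partial>M) = 0}"
  unfolding energy_approximable_def
proof (intro ballI allI impI)
  fix v :: "real \<Rightarrow> real" and e :: real
  assume "v \<in> {v. continuous_on UNIV v}" "e > 0"
  then have v: "continuous_on UNIV v" by simp
  define I where "I = (\<integral>t. v t \<partial>M)"
  obtain \<eta> where \<eta>: "0 < \<eta>" "\<eta> \<le> a" "(4 * \<bar>I\<bar>) powr p * c * \<eta> powr \<delta> < e"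
    using exists_small_powr[OF a_pos \<delta>_pos \<open>e > 0\<close>, of "(4 * \<bar>I\<bar>) powr p * c"] c_pos by auto
  define J where "J = (\<integral>t. tent \<eta> t \<partial>M)"
  have J: "\<eta> / 4 \<le> J"
    unfolding J_def by (rule integral_tent_ge[OF \<eta>(1,2)])
  define C where "C = I / J"
  define w where "w t = v t - C * tent \<eta> t" for t
  have w_cont: "continuous_on UNIV w"
    unfolding w_def using v continuous_on_tent by (intro continuous_intros)
  have "(\<integral>t. w t \<partial>M) = I - C * J"
    unfolding w_def I_def J_def
    using integrable_restrict_Icc_continuous[OF v]
      integrable_restrict_Icc_continuous[OF continuous_on_tent]
    by simp
  also have "\<dots> = 0"
    using J \<eta>(1) by (simp add: C_def)
  finally have w_mean: "(\<integral>t. w t \<partial>M) = 0" .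
  have "\<bar>C\<bar> = \<bar>I\<bar> / J"
    using J \<eta>(1) by (simp add: C_def abs_div)
  also have "\<dots> \<le> \<bar>I\<bar> / (\<eta> / 4)"
    using J \<eta>(1) by (intro divide_left_mono) auto
  finally have C_le: "\<bar>C\<bar> \<le> 4 * \<bar>I\<bar> / \<eta>"
    by (simp add: mult.commute)
  have v_minus_w: "(\<lambda>t. v t - w t) = (\<lambda>t. C * tent \<eta> t)"
    by (simp add: w_def)
  have "energy (\<lambda>t. C * tent \<eta> t) \<le> \<bar>C\<bar> powr p * c * \<eta> powr (p + \<delta>)"
    using energy_scaled_tent_le(2)[OF \<eta>(1,2)] .
  also have "\<dots> \<le> (4 * \<bar>I\<bar> / \<eta>) powr p * c * \<eta> powr (p + \<delta>)"
    using C_le p_ge_1 c_pos by (intro mult_right_mono powr_mono2) auto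
  also have "\<dots> = (4 * \<bar>I\<bar>) powr p * c * \<eta> powr \<delta>"
    using \<eta>(1) by (simp add: powr_divide powr_add)
  also have "\<dots> < e"
    by (fact \<eta>(3))
  finally show "\<exists>w\<in>{w. continuous_on UNIV w \<and> (\<integral>t. w t \<partial>M) = 0}.
      finite_energy (\<lambda>t. v t - w t) \<and> energy (\<lambda>t. v t - w t) < e"
    using w_cont w_mean energy_scaled_tent_le(1)[OF \<eta>(1,2)]
    by (intro bexI[of _ w]) (auto simp: v_minus_w)
qed

lemma finite_energy_approximable_by_C1_0:
  assumes "finite_energy g" "0 < e"
  obtains w where "C1_0 a (\<lambda>t. integral {0..t} w) w"
    "finite_energy (\<lambda>t. g t - w t)" "energy (\<lambda>t. g t - w t) < e"
proof -
  have "energy_approximable {g. finite_energy g} {w. continuous_on UNIV w \<and> (\<integral>t. w t \<partial>M) = 0}"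
    by (rule energy_approximable_trans[OF finite_energy_approximable_by_bounded
          energy_approximable_trans[OF bounded_approximable_by_continuous
            continuous_approximable_by_mean_zero]])
  then obtain w where w: "continuous_on UNIV w" "(\<integral>t. w t \<partial>M) = 0"
    and close: "finite_energy (\<lambda>t. g t - w t)" "energy (\<lambda>t. g t - w t) < e"
    using assms unfolding energy_approximable_def by blast
  have w_cont: "continuous_on {0..a} w"
    using w(1) by (rule continuous_on_subset) simp
  have "C1_0 a (\<lambda>t. integral {0..t} w) w"
    using w(2) integral_restrict_Icc_continuous[OF w_cont]
    by (intro C1_0_integral_of_mean_zero[OF w_cont]) simp
  then show ?thesis
    using close by (rule that)
qed

end

theorem lemma2p1:
  fixes a p c1 c2 \<delta> :: real and \<phi> \<phi>' :: "real \<Rightarrow> real"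
  assumes "a > 0" and "p > 1"
    and "continuous_on {0..a} \<phi>"
    and "continuous_on {0<..a} \<phi>'"
    and "\<forall>t\<in>{0<..a}. (\<phi> has_real_derivative \<phi>' t) (at t within {0<..a})"
    and "\<phi> 0 = 0" and "\<forall>t\<in>{0<..a}. \<phi> t > 0"
    and "c1 > 0" and "c2 > 0" and "\<delta> > 0"
    and "\<forall>t\<in>{0<..a}. c1 * t powr (p - 1 + \<delta>) \<le> \<phi> t \<and> \<phi> t \<le> c2 * t powr (p - 1 + \<delta>)"
  shows "\<forall>u g. E_space a p \<phi> u g \<longrightarrow>
           (\<forall>e>0. \<exists>v v'. C1_0 a v v' \<and>
              set_integrable lborel {0..a} (\<lambda>t. \<bar>g t - v' t\<bar> powr p * \<phi> t) \<and>
              (LINT t:{0..a}|lborel. \<bar>g t - v' t\<bar> powr p * \<phi> t) powr (1 / p) < e)"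
proof (intro allI impI)
  fix u g and e :: real
  assume E: "E_space a p \<phi> u g" and "0 < e"
  have weight: "0 \<le> \<phi> t \<and> \<phi> t \<le> c2 * t powr (p - 1 + \<delta>)" if "t \<in> {0..a}" for t
    using assms(6,7,11) that by (cases "t = 0") (auto intro: less_imp_le)
  interpret weighted_energy_power_bound a p \<phi> c2 \<delta>
    using assms(1-3,9,10) weight by unfold_locales auto
  have "finite_energy g"
    using E unfolding E_space_def W1p_def by (intro finite_energy_if_set_integrable) auto
  moreover have "0 < e powr p"
    using \<open>0 < e\<close> by simp
  ultimately obtain w where "C1_0 a (\<lambda>t. integral {0..t} w) w"
    and fin: "finite_energy (\<lambda>t. g t - w t)" and small: "energy (\<lambda>t. g t - w t) < e powr p"
    by (rule finite_energy_approximable_by_C1_0)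
  moreover have "set_integrable lborel {0..a} (\<lambda>t. \<bar>g t - w t\<bar> powr p * \<phi> t)"
    using fin by (rule set_integrable_if_finite_energy)
  moreover have "(LINT t:{0..a}|lborel. \<bar>g t - w t\<bar> powr p * \<phi> t) powr (1 / p) < e"
    using small energy_nonneg \<open>0 < e\<close> assms(2) unfolding energy_eq_set_integral
    by (intro powr_root_less_of_less_powr) auto
  ultimately show "\<exists>v v'. C1_0 a v v' \<and>
      set_integrable lborel {0..a} (\<lambda>t. \<bar>g t - v' t\<bar> powr p * \<phi> t) \<and>
      (LINT t:{0..a}|lborel. \<bar>g t - v' t\<bar> powr p * \<phi> t) powr (1 / p) < e"
    by blast
qed

end
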